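(* Let $n>k\ge 1$ be integers, not both even, such that $n\neq Mk$ for every positive integer $M$. Let $\alpha=\lceil n/2\rceil-\lfloor (n-k)/2\rfloor$, $\beta=k-\alpha$, and $G=\sqrt{n/k}\,W_n^H\Sigma W_k$. Then no systematic DFT frame $G_{\mathrm{sys}}=GG_k^{-1}$ (with $G_k$ any $k\times k$ submatrix of $G$ formed by $k$ distinct rows) is tight; i.e. for every such $G_k$ there is no $c>0$ with $G_{\mathrm{sys}}^HG_{\mathrm{sys}}=cI_k$.
   Context: For a positive integer $l$, $W_l$ denotes the unitary $l\times l$ DFT matrix, $(W_l)_{r,s}=\frac{1}{\sqrt l}e^{-j2\pi(r-1)(s-1)/l}$, and $^H$ denotes conjugate transpose. $\Sigma$ is the $n\times k$ matrix $\begin{pmatrix} I_\alpha & 0\\ 0 & 0\\ 0 & I_\beta\end{pmatrix}$: its first $\alpha$ rows are $(I_\alpha\ 0)$, its last $\beta$ rows are $(0\ I_\beta)$, and its middle $n-k$ rows are zero. For any choice of $k$ distinct rows of $G$, the resulting $k\times k$ submatrix $G_k$ is invertible, and the matrix $G_{\mathrm{sys}}=GG_k^{-1}$ (an $n\times k$ matrix containing $I_k$ as a submatrix) is called a systematic DFT frame. A frame with $n\times k$ analysis operator $F$ is tight if $F^HF=cI_k$ for some $c>0$, equivalently all eigenvalues of $F^HF$ are equal. *)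

theory Defs
  imports Complex_Main "Jordan_Normal_Form.Matrix"
begin

definition ctrans :: "complex mat \<Rightarrow> complex mat" where
  "ctrans A = mat (dim_col A) (dim_row A) (\<lambda>(i,j). cnj (A $$ (j,i)))"

definition DFT :: "nat \<Rightarrow> complex mat" where
  "DFT l = mat l l (\<lambda>(r,s). complex_of_real (1 / sqrt (real l)) *
                            cis (- 2 * pi * real r * real s / real l))"

(* n x k matrix Sigma: identity I_alpha in the top-left, zero middle n-k rows,
   identity I_beta in the bottom-right (rows n-beta..n-1, columns alpha..k-1),
   with beta = k - alpha *)
definition Sigma :: "nat \<Rightarrow> nat \<Rightarrow> nat \<Rightarrow> complex mat" where
  "Sigma n k \<alpha> = mat n k (\<lambda>(i,j).
      if i < \<alpha> \<and> j = i then 1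
      else if n - (k - \<alpha>) \<le> i \<and> \<alpha> \<le> j \<and> j - \<alpha> = i - (n - (k - \<alpha>)) then 1
      else 0)"

definition Gmat :: "nat \<Rightarrow> nat \<Rightarrow> nat \<Rightarrow> complex mat" where
  "Gmat n k \<alpha> = complex_of_real (sqrt (real n / real k)) \<cdot>\<^sub>m
                  (ctrans (DFT n) * Sigma n k \<alpha> * DFT k)"

definition row_submat :: "complex mat \<Rightarrow> nat \<Rightarrow> (nat \<Rightarrow> nat) \<Rightarrow> complex mat" where
  "row_submat A k rs = mat k (dim_col A) (\<lambda>(i,j). A $$ (rs i, j))"

definition tight_frame :: "complex mat \<Rightarrow> bool" where
  "tight_frame F \<longleftrightarrow> (\<exists>c::real. c > 0 \<and>
       ctrans F * F = complex_of_real c \<cdot>\<^sub>m 1\<^sub>m (dim_col F))"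

end

theory Submission
  imports Defs "Jordan_Normal_Form.Determinant" "HOL-Number_Theory.Cong"
begin

text \<open>
  Since \<open>W\<^sub>k\<close> is unitary and \<open>W\<^sub>n\<^sup>H \<Sigma>\<close> consists of distinct columns of the unitary
  \<open>W\<^sub>n\<^sup>H\<close>, the columns of \<open>G\<close> are orthogonal: \<open>G\<^sup>H G = (n/k) I\<close>. If \<open>G G\<^sub>k\<^sup>-\<^sup>1\<close> were
  tight, \<open>G\<^sub>k\<^sup>-\<^sup>H G\<^sub>k\<^sup>-\<^sup>1\<close> and hence \<open>G\<^sub>k G\<^sub>k\<^sup>H\<close> would be multiples of \<open>I\<close>, i.e. the \<open>k\<close>
  chosen rows of \<open>G\<close> would be pairwise orthogonal. Up to a factor, the inner product of
  rows \<open>p\<close> and \<open>q\<close> of \<open>G\<close> is the sum of \<open>z\<^sup>r\<close> over the \<open>k\<close> rows \<open>r\<close> on which \<open>\<Sigma>\<close> is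
  supported, where \<open>z = \<omega>\<^sub>n\<^sup>p\<^sup>-\<^sup>q\<close>. These rows form a cyclic interval of length \<open>k\<close> modulo \<open>n\<close>,
  so the sum vanishes only if \<open>z\<^sup>k = 1\<close>, i.e. \<open>n\<close> divides \<open>(p - q) k\<close>. At most
  \<open>gcd n k\<close> residues modulo \<open>n\<close> are pairwise related in this way, and \<open>gcd n k < k\<close>
  because \<open>k\<close> does not divide \<open>n\<close>.
\<close>

section \<open>Roots of unity and residues\<close>

definition unit_root :: "nat \<Rightarrow> complex" where
  "unit_root l = cis (2 * pi / real l)"

lemma unit_root_pow: "unit_root l ^ m = cis (2 * pi * real m / real l)"
  by (simp add: unit_root_def DeMoivre mult_ac)

lemma cnj_unit_root_pow_mult: "cnj (unit_root l ^ m) * unit_root l ^ m = 1"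
  by (simp add: unit_root_pow cis_cnj cis_mult)

lemma unit_root_pow_eq_1_iff:
  assumes "l > 0"
  shows "unit_root l ^ m = 1 \<longleftrightarrow> l dvd m"
proof
  assume "unit_root l ^ m = 1"
  then have "cos (2 * pi * real m / real l) = 1"
    by (metis unit_root_pow cis.sel(1) one_complex.sel(1))
  then obtain t :: int where "2 * pi * real m / real l = t * 2 * pi"
    by (auto simp: cos_one_2pi_int)
  with assms have "of_int (int m) = (of_int (t * int l) :: real)"
    by (simp add: field_simps)
  then have "int m = t * int l"
    by (simp only: of_int_eq_iff)
  then show "l dvd m"
    by (metis dvd_triv_right int_dvd_int_iff)
next
  assume "l dvd m"
  then obtain t where "m = l * t" ..
  with assms show "unit_root l ^ m = 1"
    using cis_multiple_2pi[of "real t"] by (simp add: unit_root_pow mult.assoc)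
qed

lemma unit_root_pow_eq_iff:
  assumes "l > 0"
  shows "unit_root l ^ a = unit_root l ^ b \<longleftrightarrow> [a = b] (mod l)"
proof -
  have *: "unit_root l ^ a = unit_root l ^ b \<longleftrightarrow> [a = b] (mod l)" if "b \<le> a" for a b
  proof -
    have "unit_root l ^ a = unit_root l ^ b * unit_root l ^ (a - b)"
      using that by (simp flip: power_add)
    moreover have "unit_root l ^ b \<noteq> 0"
      by (simp add: unit_root_def)
    ultimately have "unit_root l ^ a = unit_root l ^ b \<longleftrightarrow> unit_root l ^ (a - b) = 1"
      by auto
    also have "\<dots> \<longleftrightarrow> [a = b] (mod l)"
      using assms that by (simp add: unit_root_pow_eq_1_iff cong_altdef_nat)
    finally show ?thesis .
  qed
  show ?thesis
    using *[of a b] *[of b a] by (cases "b \<le> a") (auto simp: cong_sym_eq)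
qed

lemma unit_root_pow_mult_cnj_eq_1_iff:
  assumes "l > 0"
  shows "unit_root l ^ a * cnj (unit_root l ^ b) = 1 \<longleftrightarrow> [a = b] (mod l)"
proof -
  have "unit_root l ^ a * cnj (unit_root l ^ b) = 1 \<longleftrightarrow> unit_root l ^ a = unit_root l ^ b"
    using cnj_unit_root_pow_mult[of l b] by (metis mult.assoc mult.right_neutral mult.commute)
  with assms show ?thesis
    by (simp only: unit_root_pow_eq_iff)
qed

lemma unit_root_pow_mult_cnj_pow_period:
  assumes "l > 0"
  shows "(unit_root l ^ a * cnj (unit_root l ^ b)) ^ l = 1"
proof -
  have "(unit_root l ^ a * cnj (unit_root l ^ b)) ^ l = (unit_root l ^ l) ^ a * cnj ((unit_root l ^ l) ^ b)"
    by (simp add: power_mult_distrib complex_cnj_power flip: power_mult) (simp add: mult.commute)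
  also have "unit_root l ^ l = 1"
    using assms by (simp add: unit_root_pow_eq_1_iff)
  finally show ?thesis
    by simp
qed

lemma sum_powers_root_of_unity:
  fixes z :: complex
  assumes "z ^ l = 1"
  shows "(\<Sum>m<l. z ^ m) = (if z = 1 then of_nat l else 0)"
  using power_diff_1_eq[of z l] assms by auto

lemma sum_unit_root_orthogonality:
  assumes "l > 0"
  shows "(\<Sum>m<l. (unit_root l ^ a * cnj (unit_root l ^ b)) ^ m) =
    (if [a = b] (mod l) then of_nat l else 0)"
  using assms by (simp only: sum_powers_root_of_unity unit_root_pow_mult_cnj_pow_period
      unit_root_pow_mult_cnj_eq_1_iff)

lemma card_le_gcd_if_cong_mult:
  fixes S :: "nat set"
  assumes S: "S \<subseteq> {..<n}" and cong: "\<forall>x\<in>S. \<forall>y\<in>S. [x * k = y * k] (mod n)"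
  shows "card S \<le> gcd n k"
proof (cases "n = 0 \<or> k = 0")
  case True
  then show ?thesis
    using card_mono[OF _ S] S by auto
next
  case False
  define g where "g = gcd n k"
  define m where "m = n div g"
  define k' where "k' = k div g"
  have n: "n = m * g" and k: "k = k' * g"
    by (simp_all add: m_def k'_def g_def)
  have "g > 0" "m > 0"
    using False by (simp_all add: g_def m_def div_greater_zero_iff)
  have "coprime k' m"
    using False unfolding k'_def m_def g_def by (metis div_gcd_coprime coprime_commute)
  have "x mod m = y mod m" if "x \<in> S" "y \<in> S" for x y
  proof -
    have "x * k mod n = y * k mod n"
      using cong that unfolding cong_def by blast
    then have "(x * k') mod m * g = (y * k') mod m * g"
      unfolding n k by (simp only: mult.assoc[symmetric] mod_mult_mult2)
    then have "[x * k' = y * k'] (mod m)"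
      using \<open>g > 0\<close> by (simp add: cong_def)
    then have "[x = y] (mod m)"
      using cong_mult_rcancel_nat[OF \<open>coprime k' m\<close>] by simp
    then show ?thesis
      by (simp only: cong_def)
  qed
  then have "inj_on (\<lambda>x. x div m) S"
    by (intro inj_onI) (metis div_mult_mod_eq)
  moreover have "(\<lambda>x. x div m) ` S \<subseteq> {..<g}"
    using S \<open>m > 0\<close> unfolding n by (auto simp: div_less_iff_less_mult mult.commute)
  ultimately have "card S \<le> card {..<g}"
    by (intro card_inj_on_le) simp_all
  then show ?thesis
    by (simp add: g_def)
qed

lemma ctrans_carrier_mat [simp]: "A \<in> carrier_mat n m \<Longrightarrow> ctrans A \<in> carrier_mat m n"
  by (simp add: ctrans_def)

lemma dim_ctrans [simp]: "dim_row (ctrans A) = dim_col A" "dim_col (ctrans A) = dim_row A"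
  by (simp_all add: ctrans_def)

lemma index_ctrans [simp]: "i < dim_col A \<Longrightarrow> j < dim_row A \<Longrightarrow> ctrans A $$ (i, j) = cnj (A $$ (j, i))"
  by (simp add: ctrans_def)

lemma ctrans_ctrans [simp]: "ctrans (ctrans A) = A"
  by (rule eq_matI) simp_all

lemma ctrans_mult: "dim_col A = dim_row B \<Longrightarrow> ctrans (A * B) = ctrans B * ctrans A"
  by (rule eq_matI) (auto simp: scalar_prod_def mult.commute intro!: sum.cong)

lemma ctrans_smult: "ctrans (c \<cdot>\<^sub>m A) = cnj c \<cdot>\<^sub>m ctrans A"
  by (rule eq_matI) auto

lemma index_ctrans_mult:
  assumes "i < dim_col A" "j < dim_col B" "dim_row A = dim_row B"
  shows "(ctrans A * B) $$ (i, j) = (\<Sum>p<dim_row A. cnj (A $$ (p, i)) * B $$ (p, j))"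
  using assms by (simp add: scalar_prod_def atLeast0LessThan)

lemma index_mult_ctrans:
  assumes "i < dim_row A" "j < dim_row B" "dim_col A = dim_col B"
  shows "(A * ctrans B) $$ (i, j) = (\<Sum>l<dim_col A. A $$ (i, l) * cnj (B $$ (j, l)))"
  using assms by (simp add: scalar_prod_def atLeast0LessThan)

lemma smult_smult_mat: "a \<cdot>\<^sub>m (b \<cdot>\<^sub>m A) = (a * b) \<cdot>\<^sub>m (A :: complex mat)"
  by (rule eq_matI) auto

lemma smult_mult_smult_mat:
  assumes "A \<in> carrier_mat n m" "B \<in> carrier_mat m p"
  shows "(a \<cdot>\<^sub>m A) * (b \<cdot>\<^sub>m B) = (a * b) \<cdot>\<^sub>m (A * B :: complex mat)"
  using assms by (intro eq_matI) (auto simp: scalar_prod_def sum_distrib_left mult_ac)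

lemma smult_mat_eq_imp_eq_inverse_smult:
  fixes A B :: "complex mat"
  assumes "r \<cdot>\<^sub>m A = B" "r \<noteq> 0"
  shows "A = inverse r \<cdot>\<^sub>m B"
  using assms by (auto intro!: eq_matI)

lemma ctrans_mult_isometry_unitary:
  assumes B: "B \<in> carrier_mat n k" and W: "W \<in> carrier_mat k k"
    and BB: "ctrans B * B = 1\<^sub>m k" and WW: "ctrans W * W = 1\<^sub>m k"
  shows "ctrans (B * W) * (B * W) = 1\<^sub>m k"
proof -
  have cB: "ctrans B \<in> carrier_mat k n" and cW: "ctrans W \<in> carrier_mat k k"
    using B W by simp_all
  have "ctrans (B * W) * (B * W) = ctrans W * ctrans B * (B * W)"
    using B W by (simp add: ctrans_mult)
  also have "\<dots> = ctrans W * (ctrans B * (B * W))"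
    using assoc_mult_mat[OF cW cB mult_carrier_mat[OF B W]] .
  also have "ctrans B * (B * W) = (ctrans B * B) * W"
    by (rule assoc_mult_mat[OF cB B W, symmetric])
  finally show ?thesis
    using W by (simp add: BB WW)
qed

lemma mult_unitary_mult_ctrans:
  assumes B: "B \<in> carrier_mat n k" and W: "W \<in> carrier_mat k k"
    and WW: "W * ctrans W = 1\<^sub>m k"
  shows "(B * W) * ctrans (B * W) = B * ctrans B"
proof -
  have cB: "ctrans B \<in> carrier_mat k n" and cW: "ctrans W \<in> carrier_mat k k"
    using B W by simp_all
  have "(B * W) * ctrans (B * W) = B * W * (ctrans W * ctrans B)"
    using B W by (simp add: ctrans_mult)
  also have "\<dots> = B * (W * (ctrans W * ctrans B))"
    using assoc_mult_mat[OF B W mult_carrier_mat[OF cW cB]] .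
  also have "W * (ctrans W * ctrans B) = (W * ctrans W) * ctrans B"
    by (rule assoc_mult_mat[OF W cW cB, symmetric])
  finally show ?thesis
    using B by (simp add: WW)
qed

section \<open>Fourier matrices\<close>

text \<open>\<open>fourier_mat n n id\<close> is \<open>W\<^sub>n\<^sup>H\<close>; \<open>fourier_mat n k f\<close> consists of its columns \<open>f 0, \<dots>, f (k - 1)\<close>.\<close>

definition fourier_mat :: "nat \<Rightarrow> nat \<Rightarrow> (nat \<Rightarrow> nat) \<Rightarrow> complex mat" where
  "fourier_mat n k f =
     mat n k (\<lambda>(p, j). complex_of_real (1 / sqrt (real n)) * unit_root n ^ (p * f j))"

lemma fourier_mat_carrier [simp]: "fourier_mat n k f \<in> carrier_mat n k"
  by (simp add: fourier_mat_def)

lemma dim_fourier_mat [simp]: "dim_row (fourier_mat n k f) = n" "dim_col (fourier_mat n k f) = k"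
  by (simp_all add: fourier_mat_def)

lemma fourier_mat_entry_mult_cnj:
  assumes "p < n" "q < n" "i < k" "j < k"
  shows "fourier_mat n k f $$ (p, j) * cnj (fourier_mat n k f $$ (q, i)) =
    1 / of_nat n * unit_root n ^ (p * f j) * cnj (unit_root n ^ (q * f i))"
proof -
  have "complex_of_real (1 / sqrt (real n)) * complex_of_real (1 / sqrt (real n)) = 1 / of_nat n"
    by (simp flip: of_real_mult)
  then show ?thesis
    using assms by (simp add: fourier_mat_def mult_ac)
qed

lemma ctrans_fourier_mat_mult_self:
  assumes "n > 0" and inj: "inj_on (\<lambda>j. f j mod n) {..<k}"
  shows "ctrans (fourier_mat n k f) * fourier_mat n k f = 1\<^sub>m k"
proof (rule eq_matI)
  fix i j
  assume "i < dim_row (1\<^sub>m k :: complex mat)" "j < dim_col (1\<^sub>m k :: complex mat)"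
  then have ij: "i < k" "j < k"
    by simp_all
  have "(ctrans (fourier_mat n k f) * fourier_mat n k f) $$ (i, j) =
      (\<Sum>p<n. cnj (fourier_mat n k f $$ (p, i)) * fourier_mat n k f $$ (p, j))"
    using index_ctrans_mult[of i "fourier_mat n k f" j "fourier_mat n k f"] ij by simp
  also have "\<dots> = (\<Sum>p<n. 1 / of_nat n * (unit_root n ^ f j * cnj (unit_root n ^ f i)) ^ p)"
    using ij by (intro sum.cong)
      (simp_all add: fourier_mat_entry_mult_cnj power_mult_distrib mult.commute flip: power_mult)
  also have "\<dots> = 1 / of_nat n * (\<Sum>p<n. (unit_root n ^ f j * cnj (unit_root n ^ f i)) ^ p)"
    by (rule sum_distrib_left [symmetric])
  also have "\<dots> = 1 / of_nat n * (if [f j = f i] (mod n) then of_nat n else 0)"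
    by (simp only: sum_unit_root_orthogonality[OF assms(1)])
  also have "\<dots> = (if [f j = f i] (mod n) then 1 else 0)"
    using assms by simp
  also have "\<dots> = 1\<^sub>m k $$ (i, j)"
    using ij inj_on_eq_iff[OF inj, of j i] by (simp add: cong_def)
  finally show "(ctrans (fourier_mat n k f) * fourier_mat n k f) $$ (i, j) = 1\<^sub>m k $$ (i, j)" .
qed simp_all

lemma index_fourier_mat_mult_ctrans:
  assumes "p < n" "q < n"
  shows "(fourier_mat n k f * ctrans (fourier_mat n k f)) $$ (p, q) =
    1 / of_nat n * (\<Sum>j<k. (unit_root n ^ p * cnj (unit_root n ^ q)) ^ f j)"
proof -
  have "(fourier_mat n k f * ctrans (fourier_mat n k f)) $$ (p, q) =
      (\<Sum>j<k. fourier_mat n k f $$ (p, j) * cnj (fourier_mat n k f $$ (q, j)))"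
    using index_mult_ctrans[of p "fourier_mat n k f" q "fourier_mat n k f"] assms by simp
  also have "\<dots> = (\<Sum>j<k. 1 / of_nat n * (unit_root n ^ p * cnj (unit_root n ^ q)) ^ f j)"
    using assms fourier_mat_entry_mult_cnj[of p n q _ k _ f]
    by (intro sum.cong) (simp_all add: power_mult_distrib mult.commute flip: power_mult)
  finally show ?thesis
    by (simp add: sum_distrib_left)
qed

lemma fourier_mat_unitary:
  assumes "l > 0"
  shows "ctrans (fourier_mat l l id) * fourier_mat l l id = 1\<^sub>m l"
    and "fourier_mat l l id * ctrans (fourier_mat l l id) = 1\<^sub>m l"
proof -
  show *: "ctrans (fourier_mat l l id) * fourier_mat l l id = 1\<^sub>m l"
    using assms by (intro ctrans_fourier_mat_mult_self) (auto intro: inj_onI)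
  show "fourier_mat l l id * ctrans (fourier_mat l l id) = 1\<^sub>m l"
    by (rule mat_mult_left_right_inverse[OF _ _ *]) simp_all
qed

lemma DFT_carrier [simp]: "DFT l \<in> carrier_mat l l"
  by (simp add: DFT_def)

lemma DFT_eq_ctrans_fourier_mat: "DFT l = ctrans (fourier_mat l l id)"
  by (rule eq_matI) (auto simp: DFT_def fourier_mat_def unit_root_pow cis_cnj mult_ac)

section \<open>The matrix G\<close>

definition Sigma_row :: "nat \<Rightarrow> nat \<Rightarrow> nat \<Rightarrow> nat \<Rightarrow> nat" where
  "Sigma_row n k a j = (if j < a then j else n - k + j)"

lemma Sigma_row_less: "k \<le> n \<Longrightarrow> j < k \<Longrightarrow> Sigma_row n k a j < n"
  by (auto simp: Sigma_row_def)

lemma inj_on_Sigma_row_mod: "k \<le> n \<Longrightarrow> inj_on (\<lambda>j. Sigma_row n k a j mod n) {..<k}"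
  by (rule inj_onI) (auto simp: Sigma_row_def split: if_splits)

lemma Sigma_carrier [simp]: "Sigma n k a \<in> carrier_mat n k"
  by (simp add: Sigma_def)

lemma index_Sigma:
  assumes "a \<le> k" "k \<le> n" "i < n" "j < k"
  shows "Sigma n k a $$ (i, j) = (if i = Sigma_row n k a j then 1 else 0)"
proof (cases "j < a")
  case True
  then show ?thesis
    using assms by (simp add: Sigma_def Sigma_row_def)
next
  case False
  then have "n - (k - a) \<le> i \<and> j - a = i - (n - (k - a)) \<longleftrightarrow> i = n - k + j"
    using assms by linarith
  with False show ?thesis
    using assms by (simp add: Sigma_def Sigma_row_def)
qed

lemma fourier_mat_mult_Sigma:
  assumes "a \<le> k" "k \<le> n"
  shows "fourier_mat n n id * Sigma n k a = fourier_mat n k (Sigma_row n k a)"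
proof (rule eq_matI)
  fix p j
  assume "p < dim_row (fourier_mat n k (Sigma_row n k a))" "j < dim_col (fourier_mat n k (Sigma_row n k a))"
  then have pj: "p < n" "j < k"
    by simp_all
  have "(fourier_mat n n id * Sigma n k a) $$ (p, j) =
      (\<Sum>i\<in>{0..<n}. fourier_mat n n id $$ (p, i) * Sigma n k a $$ (i, j))"
    using pj by (simp add: scalar_prod_def carrier_matD[OF Sigma_carrier])
  also have "\<dots> = (\<Sum>i\<in>{0..<n}. if i = Sigma_row n k a j then fourier_mat n n id $$ (p, i) else 0)"
    using assms pj by (intro sum.cong) (simp_all add: index_Sigma)
  also have "\<dots> = fourier_mat n k (Sigma_row n k a) $$ (p, j)"
    using pj Sigma_row_less[OF assms(2) pj(2)] by (simp add: fourier_mat_def)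
  finally show "(fourier_mat n n id * Sigma n k a) $$ (p, j) = fourier_mat n k (Sigma_row n k a) $$ (p, j)" .
qed (simp_all add: Sigma_def)

lemma Gmat_eq:
  assumes "a \<le> k" "k \<le> n"
  shows "Gmat n k a = complex_of_real (sqrt (real n / real k)) \<cdot>\<^sub>m
    (fourier_mat n k (Sigma_row n k a) * ctrans (fourier_mat k k id))"
  unfolding Gmat_def DFT_eq_ctrans_fourier_mat ctrans_ctrans fourier_mat_mult_Sigma[OF assms] ..

lemma Gmat_carrier: "Gmat n k a \<in> carrier_mat n k"
  unfolding Gmat_def
  by (intro smult_carrier_mat mult_carrier_mat[of _ n k] mult_carrier_mat[of _ n n]) simp_all

lemma Gmat_gram:
  assumes "0 < k" "a \<le> k" "k \<le> n"
  defines "B \<equiv> fourier_mat n k (Sigma_row n k a)"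
  shows "ctrans (Gmat n k a) * Gmat n k a = complex_of_real (n / k) \<cdot>\<^sub>m 1\<^sub>m k"
    and "Gmat n k a * ctrans (Gmat n k a) = complex_of_real (n / k) \<cdot>\<^sub>m (B * ctrans B)"
proof -
  define s where "s = complex_of_real (sqrt (n / k))"
  define W where "W = ctrans (fourier_mat k k id)"
  have G: "Gmat n k a = s \<cdot>\<^sub>m (B * W)"
    unfolding s_def B_def W_def using assms(2,3) by (rule Gmat_eq)
  have B: "B \<in> carrier_mat n k" and W: "W \<in> carrier_mat k k"
    by (simp_all add: B_def W_def)
  have BW: "B * W \<in> carrier_mat n k" and cBW: "ctrans (B * W) \<in> carrier_mat k n"
    using B W by simp_all
  have ss: "cnj s * s = complex_of_real (n / k)" "s * cnj s = complex_of_real (n / k)"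
    by (simp_all add: s_def flip: of_real_mult)
  have BB: "ctrans B * B = 1\<^sub>m k"
    unfolding B_def using assms(1,3) by (intro ctrans_fourier_mat_mult_self inj_on_Sigma_row_mod) simp_all
  have WW: "ctrans W * W = 1\<^sub>m k" "W * ctrans W = 1\<^sub>m k"
    unfolding W_def using fourier_mat_unitary[OF assms(1)] by simp_all
  show "ctrans (Gmat n k a) * Gmat n k a = complex_of_real (n / k) \<cdot>\<^sub>m 1\<^sub>m k"
    unfolding G ctrans_smult smult_mult_smult_mat[OF cBW BW] ss
      ctrans_mult_isometry_unitary[OF B W BB WW(1)] ..
  show "Gmat n k a * ctrans (Gmat n k a) = complex_of_real (n / k) \<cdot>\<^sub>m (B * ctrans B)"
    unfolding G ctrans_smult smult_mult_smult_mat[OF BW cBW] ss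
      mult_unitary_mult_ctrans[OF B W WW(2)] ..
qed

text \<open>Modulo \<open>n\<close>, the rows \<open>Sigma_row n k a j\<close> for \<open>j < k\<close> form the cyclic interval
  \<open>n - k + a, \<dots>, n - 1, 0, \<dots>, a - 1\<close>.\<close>

lemma sum_power_Sigma_row:
  fixes z :: complex
  assumes "z ^ n = 1" "a \<le> k" "k \<le> n"
  shows "(\<Sum>j<k. z ^ Sigma_row n k a j) = z ^ (n - k + a) * (\<Sum>i<k. z ^ i)"
proof -
  let ?shift = "\<lambda>j. if j < a then j + k - a else j - a"
  have "z ^ Sigma_row n k a j = z ^ (n - k + a) * z ^ ?shift j" if "j < k" for j
  proof (cases "j < a")
    case True
    then have "n - k + a + ?shift j = n + j"
      using assms(2,3) by simp
    then have "z ^ (n - k + a) * z ^ ?shift j = z ^ j"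
      unfolding power_add[symmetric] by (simp add: power_add assms(1))
    with True show ?thesis
      by (simp add: Sigma_row_def)
  next
    case False
    with that show ?thesis
      using assms(3) by (simp add: Sigma_row_def flip: power_add)
  qed
  then have "(\<Sum>j<k. z ^ Sigma_row n k a j) = (\<Sum>i<k. z ^ (n - k + a) * z ^ i)"
    by (intro sum.reindex_bij_witness[where j = ?shift and i = "\<lambda>i. if i < k - a then i + a else i + a - k"])
      (use assms(2) in auto)
  then show ?thesis
    by (simp add: sum_distrib_left)
qed

lemma sum_power_Sigma_row_eq_0_imp_power_eq_1:
  fixes z :: complex
  assumes "z ^ n = 1" "a \<le> k" "k \<le> n" "(\<Sum>j<k. z ^ Sigma_row n k a j) = 0"
  shows "z ^ k = 1"
proof (cases "k = 0")
  case False
  with assms have "z \<noteq> 0"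
    by (metis le_zero_eq power_0_left zero_neq_one)
  with assms have "(\<Sum>i<k. z ^ i) = 0"
    by (simp add: sum_power_Sigma_row)
  then show ?thesis
    using power_diff_1_eq[of z k] by simp
qed simp

lemma Gmat_gram_eq_0_imp_cong:
  assumes "0 < k" "a \<le> k" "k \<le> n" "p < n" "q < n"
    and "(Gmat n k a * ctrans (Gmat n k a)) $$ (p, q) = 0"
  shows "[p * k = q * k] (mod n)"
proof -
  let ?B = "fourier_mat n k (Sigma_row n k a)"
  let ?z = "unit_root n ^ p * cnj (unit_root n ^ q)"
  have "n > 0"
    using assms(4) by simp
  have "(?B * ctrans ?B) $$ (p, q) = 0"
    using assms Gmat_gram(2)[OF assms(1-3)] by simp
  then have "(\<Sum>j<k. ?z ^ Sigma_row n k a j) = 0"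
    using index_fourier_mat_mult_ctrans[OF assms(4,5), of k "Sigma_row n k a"] \<open>n > 0\<close> by simp
  with \<open>n > 0\<close> have "?z ^ k = 1"
    using assms(2,3) unit_root_pow_mult_cnj_pow_period by (blast intro: sum_power_Sigma_row_eq_0_imp_power_eq_1)
  then have "unit_root n ^ (p * k) * cnj (unit_root n ^ (q * k)) = 1"
    by (simp add: power_mult power_mult_distrib)
  with \<open>n > 0\<close> show ?thesis
    by (simp only: unit_root_pow_mult_cnj_eq_1_iff)
qed

section \<open>Tight systematic frames\<close>

text \<open>Tightness makes \<open>(G X)\<^sup>H (G X) = r X\<^sup>H X\<close> scalar, so \<open>X\<^sup>H = X\<^sup>H X A\<close> is a multiple of \<open>A\<close>.\<close>

lemma tight_frame_mult_inverse_imp_scalar_gram: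
  assumes G: "G \<in> carrier_mat n k" and GG: "ctrans G * G = r \<cdot>\<^sub>m 1\<^sub>m k" "r \<noteq> 0"
    and A: "A \<in> carrier_mat k k" and X: "X \<in> carrier_mat k k"
    and XA: "X * A = 1\<^sub>m k" and AX: "A * X = 1\<^sub>m k"
    and tight: "tight_frame (G * X)"
  obtains \<mu> where "A * ctrans A = \<mu> \<cdot>\<^sub>m 1\<^sub>m k"
proof -
  have cG: "ctrans G \<in> carrier_mat k n" and cX: "ctrans X \<in> carrier_mat k k"
    using G X by simp_all
  obtain c :: real where "c > 0" and c: "ctrans (G * X) * (G * X) = c \<cdot>\<^sub>m 1\<^sub>m k"
    using tight G X by (auto simp: tight_frame_def)
  have "ctrans (G * X) * (G * X) = ctrans X * (ctrans G * (G * X))"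
    using assoc_mult_mat[OF cX cG mult_carrier_mat[OF G X]] G X by (simp add: ctrans_mult)
  also have "ctrans G * (G * X) = r \<cdot>\<^sub>m X"
    using assoc_mult_mat[OF cG G X] X by (simp add: GG mult_smult_assoc_mat[OF one_carrier_mat X])
  finally have "r \<cdot>\<^sub>m (ctrans X * X) = c \<cdot>\<^sub>m 1\<^sub>m k"
    using c mult_smult_distrib[OF cX X] by simp
  then have XX: "ctrans X * X = (c / r) \<cdot>\<^sub>m 1\<^sub>m k"
    using \<open>r \<noteq> 0\<close> by (auto dest!: smult_mat_eq_imp_eq_inverse_smult simp: smult_smult_mat field_simps)
  have "ctrans X = ctrans X * (X * A)"
    using right_mult_one_mat[OF cX] by (simp add: XA)
  also have "\<dots> = (c / r) \<cdot>\<^sub>m A"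
    using assoc_mult_mat[OF cX X A] A by (simp add: XX mult_smult_assoc_mat[OF one_carrier_mat A])
  finally have "X = cnj (c / r) \<cdot>\<^sub>m ctrans A"
    by (metis ctrans_ctrans ctrans_smult)
  then have "cnj (c / r) \<cdot>\<^sub>m (A * ctrans A) = 1\<^sub>m k"
    using AX mult_smult_distrib[OF A ctrans_carrier_mat[OF A]] by simp
  moreover have "cnj (c / r) \<noteq> 0"
    using \<open>c > 0\<close> \<open>r \<noteq> 0\<close> by simp
  ultimately show ?thesis
    by (intro that) (rule smult_mat_eq_imp_eq_inverse_smult)
qed

lemma row_submat_carrier: "row_submat G k rs \<in> carrier_mat k (dim_col G)"
  by (simp add: row_submat_def)

lemma index_row_submat_mult_ctrans:
  assumes "i < k" "j < k" "rs i < dim_row G" "rs j < dim_row G"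
  shows "(row_submat G k rs * ctrans (row_submat G k rs)) $$ (i, j) = (G * ctrans G) $$ (rs i, rs j)"
  using assms index_mult_ctrans[of i "row_submat G k rs" j "row_submat G k rs"]
    index_mult_ctrans[of "rs i" G "rs j" G]
  by (simp add: row_submat_def)

lemma tight_frame_mult_row_submat_inverse_imp_orthogonal:
  assumes G: "G \<in> carrier_mat n k" and GG: "ctrans G * G = r \<cdot>\<^sub>m 1\<^sub>m k" "r \<noteq> 0"
    and rs: "rs ` {..<k} \<subseteq> {..<n}" and X: "X \<in> carrier_mat k k"
    and "X * row_submat G k rs = 1\<^sub>m k" "row_submat G k rs * X = 1\<^sub>m k"
    and "tight_frame (G * X)"
    and ij: "i < k" "j < k" "i \<noteq> j"
  shows "(G * ctrans G) $$ (rs i, rs j) = 0"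
proof -
  have A: "row_submat G k rs \<in> carrier_mat k k"
    using row_submat_carrier[of G k rs] G by simp
  obtain \<mu> where "row_submat G k rs * ctrans (row_submat G k rs) = \<mu> \<cdot>\<^sub>m 1\<^sub>m k"
    using tight_frame_mult_inverse_imp_scalar_gram[OF G GG A X] assms by blast
  then have "(row_submat G k rs * ctrans (row_submat G k rs)) $$ (i, j) = 0"
    using ij by simp
  moreover have "rs i < dim_row G" "rs j < dim_row G"
    using rs ij G by auto
  ultimately show ?thesis
    using ij by (simp add: index_row_submat_mult_ctrans)
qed

theorem corollary1:
  fixes n k :: nat
  assumes "1 \<le> k" and "k < n"
    and "\<not> (even n \<and> even k)"
    and "\<forall>M::nat. M > 0 \<longrightarrow> n \<noteq> M * k"
  shows "\<forall>rs Gk_inv.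
           inj_on rs {0..<k} \<and> rs ` {0..<k} \<subseteq> {0..<n} \<and>
           Gk_inv \<in> carrier_mat k k \<and>
           row_submat (Gmat n k ((n + 1) div 2 - (n - k) div 2)) k rs * Gk_inv = 1\<^sub>m k \<and>
           Gk_inv * row_submat (Gmat n k ((n + 1) div 2 - (n - k) div 2)) k rs = 1\<^sub>m k
           \<longrightarrow> \<not> tight_frame (Gmat n k ((n + 1) div 2 - (n - k) div 2) * Gk_inv)"
proof (intro allI impI notI, elim conjE)
  fix rs X
  define a where "a = (n + 1) div 2 - (n - k) div 2"
  assume inj: "inj_on rs {0..<k}" and rows: "rs ` {0..<k} \<subseteq> {0..<n}" and X: "X \<in> carrier_mat k k"
    and inverse: "row_submat (Gmat n k a) k rs * X = 1\<^sub>m k" "X * row_submat (Gmat n k a) k rs = 1\<^sub>m k"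
    and tight: "tight_frame (Gmat n k a * X)"
  have k: "0 < k" "a \<le> k" "k \<le> n"
    using assms(1,2) unfolding a_def by linarith+
  have rs: "rs ` {..<k} \<subseteq> {..<n}"
    using rows by (simp add: atLeast0LessThan)
  have "[rs i * k = rs j * k] (mod n)" if "i < k" "j < k" for i j
  proof (cases "i = j")
    case False
    have "complex_of_real (real n / real k) \<noteq> 0"
      using k assms(2) by simp
    then have gram: "(Gmat n k a * ctrans (Gmat n k a)) $$ (rs i, rs j) = 0"
      using tight_frame_mult_row_submat_inverse_imp_orthogonal[OF Gmat_carrier Gmat_gram(1)[OF k]]
        rs X inverse tight that False by blast
    show ?thesis
      by (rule Gmat_gram_eq_0_imp_cong[OF k _ _ gram]) (use rs that in auto)
  qed simp
  then have "card (rs ` {0..<k}) \<le> gcd n k"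
    using rs by (intro card_le_gcd_if_cong_mult) (auto simp: atLeast0LessThan)
  then have "k \<le> gcd n k"
    using card_image[OF inj] by simp
  then have "k dvd n"
    using k by (metis antisym gcd_dvd1 gcd_le2_nat not_gr0)
  then have "n = n div k * k" "n div k > 0"
    using k by (simp_all add: div_greater_zero_iff)
  with assms(4) show False
    by blast
qed

end
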